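(* Let $G=(V,E)$ be a simple connected undirected graph with $n\ge 2$ vertices and let $S$ be the output of Algorithm Stage-One on $G$. Then $S\setminus V(G(P_S))$ is an independent set of $G$, and every vertex of $S\setminus V(G(P_S))$ has a neighbor in $V\setminus S$.
   Context: For $v\in V$, $N(v)=\{u\in V:(u,v)\in E\}$; for $U\subseteq V$, $N(U)=\{v\in V\setminus U: v \text{ has a neighbor in } U\}$. Algorithm Stage-One: set $S_0=\emptyset$ and $h=0$. While $S_h$ is not a dominating set of $G$: increase $h$ by one; for each $v\in V\setminus S_{h-1}$ its active degree is $|N(v)\setminus (S_{h-1}\cup N(S_{h-1}))|$; if the maximum active degree over $V\setminus S_{h-1}$ is positive, let $v_h$ be any vertex of $V\setminus S_{h-1}$ of maximum active degree, otherwise let $v_h$ be any vertex of $V\setminus(S_{h-1}\cup N(S_{h-1}))$; set $S_h=S_{h-1}\cup\{v_h\}$. The output is $S=S_p=\{v_1,\dots,v_p\}$. For $h\in\{1,\dots,p\}$, let $S(h)=N(v_h)\setminus(S_{h-1}\cup N(S_{h-1}))$. The set of tied pairs is $P_S=\{(v_h,v): h\in\{1,\dots,p\},\ v\in S\cap S(h)\}$. $G(P_S)$ is the subgraph of $G$ whose edges are the tied pairs and whose vertices are the endpoints of tied pairs; $V(G(P_S))$ is its vertex set. An independent set is a set of pairwise non-adjacent vertices. *)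

theory Defs
  imports Main
begin

definition simple_graph :: "'a set \<Rightarrow> ('a \<times> 'a) set \<Rightarrow> bool" where
  "simple_graph V E \<longleftrightarrow> finite V \<and> E \<subseteq> V \<times> V \<and> sym E \<and> (\<forall>v. (v, v) \<notin> E)"

definition connected_graph :: "'a set \<Rightarrow> ('a \<times> 'a) set \<Rightarrow> bool" where
  "connected_graph V E \<longleftrightarrow> (\<forall>u\<in>V. \<forall>v\<in>V. (u, v) \<in> E\<^sup>*)"

definition nbr :: "'a set \<Rightarrow> ('a \<times> 'a) set \<Rightarrow> 'a \<Rightarrow> 'a set" where
  "nbr V E v = {u \<in> V. (u, v) \<in> E}"

definition nbr_set :: "'a set \<Rightarrow> ('a \<times> 'a) set \<Rightarrow> 'a set \<Rightarrow> 'a set" where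
  "nbr_set V E U = {v \<in> V - U. \<exists>u\<in>U. (u, v) \<in> E}"

definition dominating :: "'a set \<Rightarrow> ('a \<times> 'a) set \<Rightarrow> 'a set \<Rightarrow> bool" where
  "dominating V E D \<longleftrightarrow> D \<subseteq> V \<and> (\<forall>v\<in>V - D. \<exists>u\<in>D. (u, v) \<in> E)"

definition active_degree :: "'a set \<Rightarrow> ('a \<times> 'a) set \<Rightarrow> 'a set \<Rightarrow> 'a \<Rightarrow> nat" where
  "active_degree V E S v = card (nbr V E v - (S \<union> nbr_set V E S))"

text \<open>S_h = {v_1,...,v_h}, where the run is the list [v_1,...,v_p].\<close>
definition Sh :: "'a list \<Rightarrow> nat \<Rightarrow> 'a set" where
  "Sh vs h = set (take h vs)"

text \<open>The list vs = [v_1,...,v_p] is a possible execution of Algorithm Stage-One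
(ties broken arbitrarily): the loop runs while S_{h-1} is not dominating,
each v_h is chosen according to the rule, and it stops when S_p is dominating.\<close>
definition stage_one_run :: "'a set \<Rightarrow> ('a \<times> 'a) set \<Rightarrow> 'a list \<Rightarrow> bool" where
  "stage_one_run V E vs \<longleftrightarrow>
     (\<forall>h\<in>{1..length vs}.
        let S' = Sh vs (h - 1); v = vs ! (h - 1) in
        \<not> dominating V E S' \<and> v \<in> V - S' \<and>
        (if (\<exists>u\<in>V - S'. active_degree V E S' u > 0)
         then (\<forall>u\<in>V - S'. active_degree V E S' u \<le> active_degree V E S' v)
         else v \<in> V - (S' \<union> nbr_set V E S')))
     \<and> dominating V E (set vs)"

definition Sset :: "'a set \<Rightarrow> ('a \<times> 'a) set \<Rightarrow> 'a list \<Rightarrow> nat \<Rightarrow> 'a set" where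
  "Sset V E vs h = nbr V E (vs ! (h - 1)) - (Sh vs (h - 1) \<union> nbr_set V E (Sh vs (h - 1)))"

definition tied_pairs :: "'a set \<Rightarrow> ('a \<times> 'a) set \<Rightarrow> 'a list \<Rightarrow> ('a \<times> 'a) set" where
  "tied_pairs V E vs = {(vs ! (h - 1), v) | h v. h \<in> {1..length vs} \<and> v \<in> set vs \<inter> Sset V E vs h}"

definition tied_vertices :: "'a set \<Rightarrow> ('a \<times> 'a) set \<Rightarrow> 'a list \<Rightarrow> 'a set" where
  "tied_vertices V E vs = fst ` tied_pairs V E vs \<union> snd ` tied_pairs V E vs"

definition independent :: "('a \<times> 'a) set \<Rightarrow> 'a set \<Rightarrow> bool" where
  "independent E I \<longleftrightarrow> (\<forall>x\<in>I. \<forall>y\<in>I. (x, y) \<notin> E)"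

end

theory Submission
  imports Defs
begin

text \<open>Index the run from 0, so that vs ! i is v_(i+1) and Sh vs i is S_i. A vertex of S
  adjacent to an earlier vertex of S becomes tied at the first such neighbour v_k, since it
  is then still undominated. Hence the untied vertices of S have no earlier neighbours, which
  gives independence. If moreover an untied v_(i+1) had all its neighbours in S, then S(i+1)
  would be empty, i.e. v_(i+1) had active degree 0 when chosen; yet v_(i+1) itself, being
  undominated, contributes to the active degree of any of its neighbours (which are not in
  S_i), contradicting the maximality of the choice.\<close>

lemma stage_one_run_nth:
  assumes "stage_one_run V E vs" "i < length vs"
  shows "vs ! i \<in> V - Sh vs i"
    and "\<exists>u\<in>V - Sh vs i. 0 < active_degree V E (Sh vs i) u \<Longrightarrow>
         \<forall>u\<in>V - Sh vs i. active_degree V E (Sh vs i) u \<le> active_degree V E (Sh vs i) (vs ! i)"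
  using assms unfolding stage_one_run_def Let_def
  by (auto dest!: bspec[of _ _ "Suc i"] split: if_splits)

lemma mem_Sh_nth:
  assumes "u \<in> Sh vs i"
  obtains m where "m < i" "m < length vs" "u = vs ! m"
  using assms unfolding Sh_def by (auto simp: in_set_conv_nth)

lemma Sh_mono: "k \<le> j \<Longrightarrow> Sh vs k \<subseteq> Sh vs j"
  unfolding Sh_def by (rule set_take_subset_set_take)

lemma tied_endpoints:
  assumes "i < length vs" "z \<in> set vs" "z \<in> Sset V E vs (Suc i)"
  shows "vs ! i \<in> tied_vertices V E vs" "z \<in> tied_vertices V E vs"
proof -
  have "(vs ! i, z) \<in> tied_pairs V E vs"
    unfolding tied_pairs_def using assms by (intro CollectI exI[of _ "Suc i"] exI[of _ z]) simp
  then show "vs ! i \<in> tied_vertices V E vs" "z \<in> tied_vertices V E vs"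
    unfolding tied_vertices_def by force+
qed

lemma tied_if_earlier_neighbour:
  assumes "sym E" "stage_one_run V E vs"
    and j: "j < length vs" and "k < j" "(vs ! k, vs ! j) \<in> E"
  shows "vs ! j \<in> tied_vertices V E vs"
proof -
  obtain K where K: "K < j" "(vs ! K, vs ! j) \<in> E" and first: "\<forall>m<K. (vs ! m, vs ! j) \<notin> E"
    using exists_least_iff[of "\<lambda>k. k < j \<and> (vs ! k, vs ! j) \<in> E"] assms(4,5)
    by (metis order.strict_trans)
  have vj: "vs ! j \<in> V - Sh vs j"
    using stage_one_run_nth(1)[OF assms(2) j] .
  have "vs ! j \<in> nbr V E (vs ! K)"
    using vj symD[OF assms(1) K(2)] unfolding nbr_def by blast
  moreover have "vs ! j \<notin> Sh vs K"
    using vj Sh_mono[of K j vs] K(1) by auto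
  moreover have "vs ! j \<notin> nbr_set V E (Sh vs K)"
    using first unfolding nbr_set_def by (auto elim: mem_Sh_nth)
  ultimately have "vs ! j \<in> Sset V E vs (Suc K)"
    unfolding Sset_def by simp
  then show ?thesis
    using tied_endpoints(2)[of K vs "vs ! j"] K(1) j by simp
qed

lemma untied_no_earlier_neighbour:
  assumes "sym E" "stage_one_run V E vs" "i < length vs"
    and "vs ! i \<notin> tied_vertices V E vs" "u \<in> Sh vs i"
  shows "(u, vs ! i) \<notin> E"
  using assms(5) by (elim mem_Sh_nth) (use assms tied_if_earlier_neighbour in blast)

lemma active_degree_pos:
  assumes "finite V" "x \<in> V" "(x, y) \<in> E" "x \<notin> S \<union> nbr_set V E S"
  shows "0 < active_degree V E S y"
proof -
  have "x \<in> nbr V E y - (S \<union> nbr_set V E S)"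
    using assms unfolding nbr_def by blast
  moreover have "finite (nbr V E y - (S \<union> nbr_set V E S))"
    using assms(1) unfolding nbr_def by simp
  ultimately show ?thesis
    unfolding active_degree_def by (auto simp: card_gt_0_iff)
qed

lemma connected_graph_has_neighbour:
  assumes "connected_graph V E" "2 \<le> card V" "x \<in> V"
  obtains y where "(x, y) \<in> E"
proof -
  obtain w where w: "w \<in> V" "w \<noteq> x"
  proof -
    have "\<not> V \<subseteq> {x}"
      using card_mono[of "{x}" V] assms(2) by auto
    then show ?thesis
      using that by blast
  qed
  have "(x, w) \<in> E\<^sup>*"
    using assms(1,3) w(1) unfolding connected_graph_def by blast
  then show ?thesis
    using w(2) that by (cases rule: converse_rtranclE) auto
qed

lemma untied_independent:
  assumes "simple_graph V E" "stage_one_run V E vs"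
  shows "independent E (set vs - tied_vertices V E vs)"
  unfolding independent_def
proof (intro ballI notI)
  fix x y
  assume x: "x \<in> set vs - tied_vertices V E vs" and y: "y \<in> set vs - tied_vertices V E vs"
    and xy: "(x, y) \<in> E"
  have symE: "sym E" and irr: "(x, x) \<notin> E"
    using assms(1) unfolding simple_graph_def by auto
  obtain i j where i: "i < length vs" "x = vs ! i" and j: "j < length vs" "y = vs ! j"
    using x y by (auto simp: in_set_conv_nth)
  consider "i = j" | "i < j" | "j < i" by linarith
  then show False
  proof cases
    case 1
    then show ?thesis using xy irr i j by simp
  next
    case 2
    then show ?thesis
      using tied_if_earlier_neighbour[OF symE assms(2) j(1) 2] xy i j y by simp
  next
    case 3
    then show ?thesis
      using tied_if_earlier_neighbour[OF symE assms(2) i(1) 3] symD[OF symE xy] i j x by simp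
  qed
qed

lemma untied_has_neighbour_outside:
  assumes sg: "simple_graph V E" and run: "stage_one_run V E vs"
    and x: "x \<in> set vs - tied_vertices V E vs" and xy: "(x, y) \<in> E"
  shows "\<exists>z\<in>V - set vs. (x, z) \<in> E"
proof (rule ccontr)
  assume inside: "\<not> (\<exists>z\<in>V - set vs. (x, z) \<in> E)"
  have symE: "sym E" and EV: "E \<subseteq> V \<times> V" and finV: "finite V"
    using sg unfolding simple_graph_def by auto
  obtain i where i: "i < length vs" "x = vs ! i"
    using x by (auto simp: in_set_conv_nth)
  define S where "S = Sh vs i"
  have no_earlier: "(u, x) \<notin> E" if "u \<in> S" for u
    using untied_no_earlier_neighbour[OF symE run i(1)] that x i(2) S_def by blast
  have xV: "x \<in> V" and x_free: "x \<notin> S \<union> nbr_set V E S"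
    using stage_one_run_nth(1)[OF run i(1)] no_earlier i(2) S_def
    unfolding nbr_set_def by auto
  have no_new: "Sset V E vs (Suc i) = {}"
  proof (rule equals0I)
    fix z
    assume z: "z \<in> Sset V E vs (Suc i)"
    then have "(x, z) \<in> E"
      using i(2) symD[OF symE] unfolding Sset_def nbr_def by auto
    then have "z \<in> set vs"
      using inside EV by blast
    then show False
      using tied_endpoints(1)[OF i(1) _ z] x i(2) by simp
  qed
  have x_dead: "active_degree V E S x = 0"
    using no_new unfolding active_degree_def Sset_def S_def i(2) diff_Suc_1 by (metis card.empty)
  have y_live: "0 < active_degree V E S y"
    using active_degree_pos[OF finV xV xy x_free] .
  have "y \<in> V - S"
    using xy EV no_earlier symD[OF symE xy] by auto
  then have "active_degree V E S y \<le> active_degree V E S x"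
    using stage_one_run_nth(2)[OF run i(1)] y_live i(2) S_def by blast
  then show False
    using x_dead y_live by simp
qed

theorem mainTheorem5:
  fixes V :: "'a set" and E :: "('a \<times> 'a) set" and vs :: "'a list"
  assumes "simple_graph V E"
    and "connected_graph V E"
    and "card V \<ge> 2"
    and "stage_one_run V E vs"
  shows "independent E (set vs - tied_vertices V E vs)
    \<and> (\<forall>x\<in>set vs - tied_vertices V E vs. \<exists>y\<in>V - set vs. (x, y) \<in> E)"
proof
  show "independent E (set vs - tied_vertices V E vs)"
    using untied_independent[OF assms(1,4)] .
  show "\<forall>x\<in>set vs - tied_vertices V E vs. \<exists>y\<in>V - set vs. (x, y) \<in> E"
  proof
    fix x
    assume x: "x \<in> set vs - tied_vertices V E vs"
    have "x \<in> V"
      using x assms(4) unfolding stage_one_run_def dominating_def by blast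
    then obtain y where "(x, y) \<in> E"
      using connected_graph_has_neighbour[OF assms(2,3)] by blast
    then show "\<exists>y\<in>V - set vs. (x, y) \<in> E"
      using untied_has_neighbour_outside[OF assms(1,4) x] by blast
  qed
qed

end
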